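(* Let $Y$ be a Banach lattice. Suppose that $F_1,F_2\colon Y\to\mathbb R\cup\{+\infty\}$ satisfy $F_1\ll_{\mathrm Q}F_2$ and that $H\colon Y\to\mathbb R\cup\{+\infty\}$ is totally substitutable. Then $F_1+H\ll_{\mathrm Q}F_2+H$.
   Context: In a Banach lattice, $\wedge,\vee$ are the lattice inf/sup, $\mu^+=\mu\vee0$ and $[a,b]=\{m:a\leq m\leq b\}$. For functions, $G_2\ll_{\mathrm Q}G_1$ means: for all $\mu_1,\mu_2\in Y$ and every $t_{21}\in[0,(\mu_2-\mu_1)^+]$ there exists $t_{12}\in[0,(\mu_1-\mu_2)^+]$ with $G_1(\mu_1+t_{21}-t_{12})+G_2(\mu_2-t_{21}+t_{12})\leq G_1(\mu_1)+G_2(\mu_2)$. $H$ is totally substitutable if for all $\mu_1,\mu_2\in Y$ and all $\mu_1',\mu_2'\in[\mu_1\wedge\mu_2,\mu_1\vee\mu_2]$ with $\mu_1'+\mu_2'=\mu_1+\mu_2$, $H(\mu_1')+H(\mu_2')\leq H(\mu_1)+H(\mu_2)$. *)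

theory Defs
  imports "HOL-Analysis.Analysis"
begin

class banach_lattice = banach + ordered_real_vector + lattice +
  assumes lattice_norm: "sup x (- x) \<le> sup y (- y) \<Longrightarrow> norm x \<le> norm y"

text \<open>Functions Y -> R \<union> {+\<infinity>} are modelled as maps into ereal never taking -\<infinity>.\<close>
definition proper_ext :: "('a \<Rightarrow> ereal) \<Rightarrow> bool" where
  "proper_ext F \<longleftrightarrow> (\<forall>y. F y \<noteq> -\<infinity>)"

definition pos_part :: "'a::banach_lattice \<Rightarrow> 'a" where
  "pos_part m = sup m 0"

text \<open>G2 <<_Q G1\<close>
definition Q_below :: "('a::banach_lattice \<Rightarrow> ereal) \<Rightarrow> ('a \<Rightarrow> ereal) \<Rightarrow> bool" where
  "Q_below G2 G1 \<longleftrightarrow>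
     (\<forall>\<mu>1 \<mu>2 t21. t21 \<in> {0 .. pos_part (\<mu>2 - \<mu>1)} \<longrightarrow>
        (\<exists>t12 \<in> {0 .. pos_part (\<mu>1 - \<mu>2)}.
           G1 (\<mu>1 + t21 - t12) + G2 (\<mu>2 - t21 + t12) \<le> G1 \<mu>1 + G2 \<mu>2))"

definition totally_substitutable :: "('a::banach_lattice \<Rightarrow> ereal) \<Rightarrow> bool" where
  "totally_substitutable H \<longleftrightarrow>
     (\<forall>\<mu>1 \<mu>2 \<mu>1' \<mu>2'. \<mu>1' \<in> {inf \<mu>1 \<mu>2 .. sup \<mu>1 \<mu>2} \<longrightarrow> \<mu>2' \<in> {inf \<mu>1 \<mu>2 .. sup \<mu>1 \<mu>2}
        \<longrightarrow> \<mu>1' + \<mu>2' = \<mu>1 + \<mu>2 \<longrightarrow> H \<mu>1' + H \<mu>2' \<le> H \<mu>1 + H \<mu>2)"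

end

theory Submission
  imports Defs "HOL-Library.Lattice_Algebras"
begin

text \<open>Any admissible exchange \<open>\<mu>\<^sub>1 + t\<^sub>2\<^sub>1 - t\<^sub>1\<^sub>2\<close>, \<open>\<mu>\<^sub>2 - t\<^sub>2\<^sub>1 + t\<^sub>1\<^sub>2\<close> keeps both
  measures in the order interval \<open>[\<mu>\<^sub>1 \<sqinter> \<mu>\<^sub>2, \<mu>\<^sub>1 \<squnion> \<mu>\<^sub>2]\<close> and preserves their sum, so a
  totally substitutable \<open>H\<close> does not increase under it. Adding this inequality for \<open>H\<close> to
  the one that \<open>Q_below F1 F2\<close> provides for the same transfer \<open>t\<^sub>1\<^sub>2\<close> gives the claim.\<close>

subclass (in banach_lattice) lattice_ab_group_add ..

context lattice_ab_group_add
begin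

lemma pprt_diff_eq_sup_diff: "pprt (b - a) = sup a b - a"
  by (simp add: pprt_def add_sup_distrib_right eq_diff_eq sup_commute)

lemma pprt_diff_eq_diff_inf: "pprt (a - b) = a - inf a b"
  by (simp add: pprt_def diff_inf_eq_sup add_sup_distrib_left sup_commute)

lemma add_diff_mem_inf_sup:
  assumes "0 \<le> s" "s \<le> pprt (b - a)" "0 \<le> t" "t \<le> pprt (a - b)"
  shows "a + s - t \<in> {inf a b .. sup a b}"
  unfolding atLeastAtMost_iff
proof
  have "inf a b = a - pprt (a - b)"
    by (simp only: pprt_diff_eq_diff_inf diff_diff_eq2 add_diff_cancel_left')
  also have "\<dots> \<le> a - t"
    using assms(4) by (rule diff_left_mono)
  also have "\<dots> \<le> a + s - t"
    using assms(1) by (simp add: diff_right_mono)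
  finally show "inf a b \<le> a + s - t" .
  have "a + s - t \<le> a + s"
    using assms(3) by (simp add: diff_le_eq add_increasing2)
  also have "\<dots> \<le> a + pprt (b - a)"
    using assms(2) by simp
  also have "\<dots> = sup a b"
    by (simp add: pprt_diff_eq_sup_diff add_diff_eq)
  finally show "a + s - t \<le> sup a b" .
qed

end

lemma pos_part_eq_pprt: "pos_part x = pprt x"
  by (simp add: pos_part_def pprt_def)

lemma totally_substitutable_exchange:
  assumes "totally_substitutable H"
    and "t21 \<in> {0 .. pos_part (\<mu>2 - \<mu>1)}" and "t12 \<in> {0 .. pos_part (\<mu>1 - \<mu>2)}"
  shows "H (\<mu>1 + t21 - t12) + H (\<mu>2 - t21 + t12) \<le> H \<mu>1 + H \<mu>2"
proof -
  have "\<mu>1 + t21 - t12 \<in> {inf \<mu>1 \<mu>2 .. sup \<mu>1 \<mu>2}"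
    using assms(2,3) by (intro add_diff_mem_inf_sup) (auto simp: pos_part_eq_pprt)
  moreover have "\<mu>2 + t12 - t21 \<in> {inf \<mu>1 \<mu>2 .. sup \<mu>1 \<mu>2}"
    using assms(2,3) add_diff_mem_inf_sup [where a = \<mu>2 and b = \<mu>1 and s = t12 and t = t21]
    by (auto simp: pos_part_eq_pprt inf_commute sup_commute)
  moreover have "(\<mu>1 + t21 - t12) + (\<mu>2 + t12 - t21) = \<mu>1 + \<mu>2"
    by (simp add: algebra_simps)
  ultimately show ?thesis
    using assms(1) unfolding totally_substitutable_def by (simp add: algebra_simps)
qed

theorem proposition2p41:
  fixes F1 F2 H :: "'a::banach_lattice \<Rightarrow> ereal"
  assumes "proper_ext F1" and "proper_ext F2" and "proper_ext H"
    and "Q_below F1 F2"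
    and "totally_substitutable H"
  shows "Q_below (\<lambda>y. F1 y + H y) (\<lambda>y. F2 y + H y)"
  unfolding Q_below_def
proof (intro allI impI)
  fix \<mu>1 \<mu>2 t21 :: 'a
  assume t21: "t21 \<in> {0 .. pos_part (\<mu>2 - \<mu>1)}"
  then obtain t12 where t12: "t12 \<in> {0 .. pos_part (\<mu>1 - \<mu>2)}"
    and F: "F2 (\<mu>1 + t21 - t12) + F1 (\<mu>2 - t21 + t12) \<le> F2 \<mu>1 + F1 \<mu>2"
    using assms(4) unfolding Q_below_def by blast
  have "H (\<mu>1 + t21 - t12) + H (\<mu>2 - t21 + t12) \<le> H \<mu>1 + H \<mu>2"
    using assms(5) t21 t12 by (rule totally_substitutable_exchange)
  with F have "F2 (\<mu>1 + t21 - t12) + H (\<mu>1 + t21 - t12) + (F1 (\<mu>2 - t21 + t12) + H (\<mu>2 - t21 + t12))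
      \<le> F2 \<mu>1 + H \<mu>1 + (F1 \<mu>2 + H \<mu>2)"
    using add_mono by (fastforce simp: ac_simps)
  with t12 show "\<exists>t12\<in>{0 .. pos_part (\<mu>1 - \<mu>2)}.
      F2 (\<mu>1 + t21 - t12) + H (\<mu>1 + t21 - t12) + (F1 (\<mu>2 - t21 + t12) + H (\<mu>2 - t21 + t12))
      \<le> F2 \<mu>1 + H \<mu>1 + (F1 \<mu>2 + H \<mu>2)"
    by blast
qed

end
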